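(* Let $(M,g)$ be an $n$-dimensional pseudo-Riemannian manifold and $T$ a Killing tensor (respectively, a traceless conformal tensor). Then: (i) if $x,y$ are eigenvectors of $T$ in the eigenspace $E_\rho$ of the eigenvalue function $\rho$, then $$(T-\rho g)\{x,y\}=g(x,y)\,s+g(s,x)\,y+g(s,y)\,x,\qquad s\equiv\mathrm d\rho-t,$$ where $t=0$ (respectively, $t=\frac{2}{n+2}\nabla\cdot T$); (ii) if $x,y,z$ are eigenvectors corresponding to three different eigenvalues, then $T(x,\{y,z\})+T(z,\{x,y\})+T(y,\{z,x\})=0$.
   Context: $\nabla$ is the Levi-Civita connection; vectors and 1-forms are identified via $g$; $T$ is viewed both as a bilinear form and as an endomorphism. $\{x,y\}=\nabla_xy+\nabla_yx$. $(\nabla\cdot T)_b=\nabla^aT_{ab}$. Killing tensor: symmetric $K$ with $\nabla_{(a}K_{bc)}=0$. Conformal tensor: traceless symmetric $T$ with $\nabla_{(a}T_{bc)}=g_{(ab}t_{c)}$ for some 1-form $t$ (necessarily $t=\frac2{n+2}\nabla\cdot T$). Eigenvectors are vector fields $x$ with $T(x)=\rho x$ for the eigenvalue function $\rho$. *)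

theory Defs
  imports "HOL-Analysis.Analysis"
begin

text \<open>Local-coordinate rendering: the manifold is represented by an open chart domain
  U in real^'n (n = CARD('n)); all tensors are given by their components in the
  coordinate frame. Vectors carry upper indices, 1-forms and bilinear forms lower ones.\<close>

definition pd :: "'n::finite \<Rightarrow> (real^'n \<Rightarrow> 'b::real_normed_vector) \<Rightarrow> real^'n \<Rightarrow> 'b" where
  "pd i f p = frechet_derivative f (at p) (axis i 1)"

definition smooth_fun :: "(real^'n::finite) set \<Rightarrow> (real^'n \<Rightarrow> real) \<Rightarrow> bool" where
  "smooth_fun U f \<longleftrightarrow> (\<forall>ks::'n list. \<forall>p\<in>U. foldr pd ks f differentiable (at p))"

definition smooth_vf :: "(real^'n::finite) set \<Rightarrow> (real^'n \<Rightarrow> real^'n) \<Rightarrow> bool" where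
  "smooth_vf U X \<longleftrightarrow> (\<forall>k. smooth_fun U (\<lambda>q. X q $ k))"

definition smooth_tf :: "(real^'n::finite) set \<Rightarrow> (real^'n \<Rightarrow> real^'n^'n) \<Rightarrow> bool" where
  "smooth_tf U A \<longleftrightarrow> (\<forall>i j. smooth_fun U (\<lambda>q. A q $ i $ j))"

definition pseudo_riemannian :: "(real^'n::finite) set \<Rightarrow> (real^'n \<Rightarrow> real^'n^'n) \<Rightarrow> bool" where
  "pseudo_riemannian U g \<longleftrightarrow> open U \<and> U \<noteq> {} \<and> smooth_tf U g \<and>
     (\<forall>p\<in>U. transpose (g p) = g p \<and> det (g p) \<noteq> 0)"

definition ginv :: "(real^'n::finite \<Rightarrow> real^'n^'n) \<Rightarrow> real^'n \<Rightarrow> real^'n^'n" where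
  "ginv g p = matrix_inv (g p)"

definition chr :: "(real^'n::finite \<Rightarrow> real^'n^'n) \<Rightarrow> real^'n \<Rightarrow> 'n \<Rightarrow> 'n \<Rightarrow> 'n \<Rightarrow> real" where
  "chr g p k i j = (1/2) * (\<Sum>l\<in>UNIV. ginv g p $ k $ l *
      (pd i (\<lambda>q. g q $ j $ l) p + pd j (\<lambda>q. g q $ i $ l) p - pd l (\<lambda>q. g q $ i $ j) p))"

definition cov :: "(real^'n::finite \<Rightarrow> real^'n^'n) \<Rightarrow> (real^'n \<Rightarrow> real^'n) \<Rightarrow> (real^'n \<Rightarrow> real^'n) \<Rightarrow> real^'n \<Rightarrow> real^'n" where
  "cov g X Y p = (\<chi> k. \<Sum>i\<in>UNIV. X p $ i *
      (pd i (\<lambda>q. Y q $ k) p + (\<Sum>j\<in>UNIV. chr g p k i j * Y p $ j)))"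

definition brace :: "(real^'n::finite \<Rightarrow> real^'n^'n) \<Rightarrow> (real^'n \<Rightarrow> real^'n) \<Rightarrow> (real^'n \<Rightarrow> real^'n) \<Rightarrow> real^'n \<Rightarrow> real^'n" where
  "brace g X Y p = cov g X Y p + cov g Y X p"

definition nablaT :: "(real^'n::finite \<Rightarrow> real^'n^'n) \<Rightarrow> (real^'n \<Rightarrow> real^'n^'n) \<Rightarrow> real^'n \<Rightarrow> 'n \<Rightarrow> 'n \<Rightarrow> 'n \<Rightarrow> real" where
  "nablaT g T p k i j = pd k (\<lambda>q. T q $ i $ j) p
     - (\<Sum>l\<in>UNIV. chr g p l k i * T p $ l $ j + chr g p l k j * T p $ i $ l)"

definition sym3 :: "('n \<Rightarrow> 'n \<Rightarrow> 'n \<Rightarrow> real) \<Rightarrow> 'n \<Rightarrow> 'n \<Rightarrow> 'n \<Rightarrow> real" where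
  "sym3 A a b c = (A a b c + A a c b + A b a c + A b c a + A c a b + A c b a) / 6"

definition divT :: "(real^'n::finite \<Rightarrow> real^'n^'n) \<Rightarrow> (real^'n \<Rightarrow> real^'n^'n) \<Rightarrow> real^'n \<Rightarrow> real^'n" where
  "divT g T p = (\<chi> b. \<Sum>a\<in>UNIV. \<Sum>c\<in>UNIV. ginv g p $ a $ c * nablaT g T p c a b)"

definition symmetric_tf :: "(real^'n::finite) set \<Rightarrow> (real^'n \<Rightarrow> real^'n^'n) \<Rightarrow> bool" where
  "symmetric_tf U T \<longleftrightarrow> smooth_tf U T \<and> (\<forall>p\<in>U. transpose (T p) = T p)"

definition killing_tensor :: "(real^'n::finite) set \<Rightarrow> (real^'n \<Rightarrow> real^'n^'n) \<Rightarrow> (real^'n \<Rightarrow> real^'n^'n) \<Rightarrow> bool" where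
  "killing_tensor U g T \<longleftrightarrow> symmetric_tf U T \<and>
     (\<forall>p\<in>U. \<forall>a b c. sym3 (nablaT g T p) a b c = 0)"

definition traceless :: "(real^'n::finite) set \<Rightarrow> (real^'n \<Rightarrow> real^'n^'n) \<Rightarrow> (real^'n \<Rightarrow> real^'n^'n) \<Rightarrow> bool" where
  "traceless U g T \<longleftrightarrow> (\<forall>p\<in>U. (\<Sum>a\<in>UNIV. \<Sum>b\<in>UNIV. ginv g p $ a $ b * T p $ a $ b) = 0)"

definition conformal_tensor :: "(real^'n::finite) set \<Rightarrow> (real^'n \<Rightarrow> real^'n^'n) \<Rightarrow> (real^'n \<Rightarrow> real^'n^'n) \<Rightarrow> bool" where
  "conformal_tensor U g T \<longleftrightarrow> symmetric_tf U T \<and> traceless U g T \<and>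
     (\<exists>t::real^'n \<Rightarrow> real^'n. \<forall>p\<in>U. \<forall>a b c.
        sym3 (nablaT g T p) a b c = sym3 (\<lambda>a' b' c'. g p $ a' $ b' * t p $ c') a b c)"

definition endo :: "(real^'n::finite \<Rightarrow> real^'n^'n) \<Rightarrow> (real^'n \<Rightarrow> real^'n^'n) \<Rightarrow> real^'n \<Rightarrow> real^'n \<Rightarrow> real^'n" where
  "endo g T p v = ginv g p *v (T p *v v)"

definition eigenvector :: "(real^'n::finite) set \<Rightarrow> (real^'n \<Rightarrow> real^'n^'n) \<Rightarrow> (real^'n \<Rightarrow> real^'n^'n) \<Rightarrow> (real^'n \<Rightarrow> real) \<Rightarrow> (real^'n \<Rightarrow> real^'n) \<Rightarrow> bool" where
  "eigenvector U g T \<rho> x \<longleftrightarrow> smooth_fun U \<rho> \<and> smooth_vf U x \<and>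
     (\<forall>p\<in>U. endo g T p (x p) = \<rho> p *\<^sub>R x p)"

definition gp :: "(real^'n::finite \<Rightarrow> real^'n^'n) \<Rightarrow> real^'n \<Rightarrow> real^'n \<Rightarrow> real^'n \<Rightarrow> real" where
  "gp g p v w = v \<bullet> (g p *v w)"

definition dfun :: "(real^'n::finite \<Rightarrow> real) \<Rightarrow> real^'n \<Rightarrow> real^'n" where
  "dfun f p = (\<chi> b. pd b f p)"

end

theory Submission
  imports Defs
begin

text \<open>
  The hypothesis on T says that the symmetrisation of nabla T equals that of g (x) t, with t = 0
  for a Killing tensor. Contract this identity with three vectors. For an eigenvector field y
  with eigenvalue rho, the Leibniz rule, metric compatibility and T(y) = rho g(y) give
  (nabla_X T)(u, y) = d rho(X) g(u, y) + g(u, (rho - T) nabla_X y); contracting with x, y of the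
  same eigenvalue and an arbitrary w then yields g(w, (T - rho) {x, y}) on one side and the
  three terms of (i), paired with w, on the other. Eigenvectors u, v of different eigenvalues are g- and
  T-orthogonal everywhere, so (nabla_X T)(u, v) = - T(nabla_X u, v) - T(u, nabla_X v), while the
  right-hand side of the contracted identity vanishes; this is (ii). In the conformal case,
  tracing the identity with g^-1 identifies t = 2/(n+2) nabla . T, because nabla_c T is again
  trace-free.
\<close>

section \<open>Partial derivatives\<close>

lemma pd_has_derivative: "(f has_derivative f') (at p) \<Longrightarrow> pd i f p = f' (axis i 1)"
  unfolding pd_def by (drule frechet_derivative_at) simp

lemma pd_cong_open:
  assumes "open U" "p \<in> U" "\<And>q. q \<in> U \<Longrightarrow> f q = h q"
  shows "pd i f p = pd i h p"
proof -
  have "(f has_derivative f') (at p) \<longleftrightarrow> (h has_derivative f') (at p)" for f'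
  proof
    assume "(f has_derivative f') (at p)"
    then show "(h has_derivative f') (at p)"
      by (rule has_derivative_transform_within_open[OF _ assms(1,2)]) (simp add: assms(3))
  next
    assume "(h has_derivative f') (at p)"
    then show "(f has_derivative f') (at p)"
      by (rule has_derivative_transform_within_open[OF _ assms(1,2)]) (simp add: assms(3))
  qed
  then show ?thesis unfolding pd_def frechet_derivative_def by simp
qed

lemma pd_const [simp]: "pd i (\<lambda>q. c) p = 0"
proof -
  have "(\<lambda>v. 0) = frechet_derivative (\<lambda>q. c) (at p)"
    by (rule frechet_derivative_at) (rule has_derivative_const)
  then show ?thesis unfolding pd_def by metis
qed

lemma pd_eq_0_open:
  assumes "open U" "p \<in> U" "\<And>q. q \<in> U \<Longrightarrow> f q = 0"
  shows "pd i f p = 0"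
  using pd_cong_open[OF assms(1,2), of f "\<lambda>q. 0"] assms(3) by simp

lemma pd_mult [simp]:
  fixes f h :: "real^'n::finite \<Rightarrow> real"
  assumes "f differentiable (at p)" "h differentiable (at p)"
  shows "pd i (\<lambda>q. f q * h q) p = f p * pd i h p + pd i f p * h p"
proof -
  have "((\<lambda>q. f q * h q) has_derivative
      (\<lambda>v. f p * frechet_derivative h (at p) v + frechet_derivative f (at p) v * h p)) (at p)"
    using assms by (intro has_derivative_mult) (auto simp: frechet_derivative_works)
  from pd_has_derivative[OF this, of i] show ?thesis unfolding pd_def by simp
qed

lemma pd_sum [simp]:
  fixes f :: "'a \<Rightarrow> real^'n::finite \<Rightarrow> real"
  assumes "finite S" "\<And>a. a \<in> S \<Longrightarrow> f a differentiable (at p)"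
  shows "pd i (\<lambda>q. \<Sum>a\<in>S. f a q) p = (\<Sum>a\<in>S. pd i (f a) p)"
proof -
  have "((\<lambda>q. \<Sum>a\<in>S. f a q) has_derivative (\<lambda>v. \<Sum>a\<in>S. frechet_derivative (f a) (at p) v)) (at p)"
    using assms by (intro has_derivative_sum) (auto simp: frechet_derivative_works)
  from pd_has_derivative[OF this, of i] show ?thesis unfolding pd_def by simp
qed

lemma dfun_cong_open:
  assumes "open U" "p \<in> U" "\<And>q. q \<in> U \<Longrightarrow> f q = h q"
  shows "dfun f p = dfun h p"
  using pd_cong_open[OF assms] by (simp add: dfun_def)

lemma dfun_eq_0_open:
  assumes "open U" "p \<in> U" "\<And>q. q \<in> U \<Longrightarrow> f q = 0"
  shows "dfun f p = 0"
  using pd_eq_0_open[OF assms] by (simp add: dfun_def vec_eq_iff)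

lemma inner_dfun: "dfun f p \<bullet> v = (\<Sum>a\<in>UNIV. v $ a * pd a f p)"
  by (simp add: dfun_def inner_vec_def mult.commute)

lemma dfun_mult:
  fixes f h :: "real^'n::finite \<Rightarrow> real"
  assumes "f differentiable (at p)" "h differentiable (at p)"
  shows "dfun (\<lambda>q. f q * h q) p = f p *\<^sub>R dfun h p + h p *\<^sub>R dfun f p"
  using assms by (simp add: dfun_def vec_eq_iff mult.commute)

lemma differentiable_prod:
  fixes f :: "'i \<Rightarrow> real^'n::finite \<Rightarrow> real"
  assumes "\<And>a. a \<in> S \<Longrightarrow> f a differentiable (at p)"
  shows "(\<lambda>q. \<Prod>a\<in>S. f a q) differentiable (at p)"
  using assms unfolding differentiable_def
  by (metis has_derivative_prod[of S f _ p UNIV] bchoice)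

lemma det_differentiable:
  fixes M :: "real^'k::finite \<Rightarrow> real^'n::finite^'n"
  assumes "\<And>i j. (\<lambda>q. M q $ i $ j) differentiable (at p)"
  shows "(\<lambda>q. det (M q)) differentiable (at p)"
  unfolding det_def
  by (intro differentiable_sum differentiable_mult differentiable_const differentiable_prod ballI)
     (auto intro: assms)

lemma differentiable_transform_open:
  assumes "f differentiable (at p)" "open U" "p \<in> U" "\<And>q. q \<in> U \<Longrightarrow> f q = h q"
  shows "h differentiable (at p)"
  using assms unfolding differentiable_def
  by (metis has_derivative_transform_within_open)

lemma smooth_fun_differentiable: "smooth_fun U f \<Longrightarrow> p \<in> U \<Longrightarrow> f differentiable (at p)"
  unfolding smooth_fun_def by (metis foldr_Nil id_apply)

lemma inner_matrix_differentiable: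
  fixes A :: "real^'n::finite \<Rightarrow> real^'n^'n"
  assumes "\<And>b. (\<lambda>q. u q $ b) differentiable (at p)" "\<And>b. (\<lambda>q. v q $ b) differentiable (at p)"
    "\<And>b c. (\<lambda>q. A q $ b $ c) differentiable (at p)"
  shows "(\<lambda>q. u q \<bullet> (A q *v v q)) differentiable (at p)"
  using assms by (simp add: inner_vec_def matrix_vector_mult_def)

definition pd_mat :: "'n::finite \<Rightarrow> (real^'n \<Rightarrow> real^'m^'k) \<Rightarrow> real^'n \<Rightarrow> real^'m^'k" where
  "pd_mat c M p = (\<chi> i j. pd c (\<lambda>q. M q $ i $ j) p)"

lemma pd_mat_mult:
  fixes M N :: "real^'n::finite \<Rightarrow> real^'n^'n"
  assumes "\<And>i j. (\<lambda>q. M q $ i $ j) differentiable (at p)"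
    "\<And>i j. (\<lambda>q. N q $ i $ j) differentiable (at p)"
  shows "pd_mat c (\<lambda>q. M q ** N q) p = pd_mat c M p ** N p + M p ** pd_mat c N p"
  using assms
  by (simp add: pd_mat_def vec_eq_iff matrix_matrix_mult_def sum.distrib algebra_simps)

lemma pd_mat_eq_const_open:
  assumes "open U" "p \<in> U" "\<And>q. q \<in> U \<Longrightarrow> M q = K"
  shows "pd_mat c M p = 0"
proof -
  have "pd c (\<lambda>q. M q $ i $ j) p = pd c (\<lambda>q. K $ i $ j) p" for i j
    by (rule pd_cong_open[OF assms(1,2)]) (simp add: assms(3))
  then show ?thesis by (simp add: pd_mat_def vec_eq_iff)
qed

lemma pd_trace:
  fixes M :: "real^'n::finite \<Rightarrow> real^'n^'n"
  assumes "\<And>i j. (\<lambda>q. M q $ i $ j) differentiable (at p)"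
  shows "pd c (\<lambda>q. trace (M q)) p = trace (pd_mat c M p)"
  using assms by (simp add: trace_def pd_mat_def)

section \<open>Matrices\<close>

lemma matrix_add_rdistrib: "((A::real^'n::finite^'m::finite) + B) ** C = A ** C + B ** C"
  by (simp add: matrix_matrix_mult_def vec_eq_iff sum.distrib algebra_simps)

lemma matrix_diff_ldistrib: "(C::real^'n::finite^'m::finite) ** (A - B) = C ** A - C ** B"
  by (simp add: matrix_matrix_mult_def vec_eq_iff sum_subtractf algebra_simps)

lemma matrix_neg_mult: "(- (A::real^'n::finite^'m::finite)) ** C = - (A ** C)"
  by (simp add: matrix_matrix_mult_def vec_eq_iff sum_negf)

lemma matrix_mult_neg: "(C::real^'n::finite^'m::finite) ** (- A) = - (C ** A)"
  by (simp add: matrix_matrix_mult_def vec_eq_iff sum_negf)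

lemma trace_neg: "trace (- (A::real^'n::finite^'n)) = - trace A"
  by (simp add: trace_def sum_negf)

lemma transpose_sym: "transpose A = A \<Longrightarrow> A $ j $ i = A $ i $ j"
  by (metis transpose_def vec_lambda_beta)

lemma vector_matrix_sym: "transpose A = A \<Longrightarrow> v v* A = A *v (v::real^'n::finite)"
  by (metis transpose_matrix_vector)

lemma inner_matrix_sym:
  "transpose A = A \<Longrightarrow> u \<bullet> (A *v v) = v \<bullet> (A *v (u::real^'n::finite))"
  by (metis dot_lmul_matrix inner_commute transpose_matrix_vector)

lemma det_nz_matrix_inv:
  fixes A :: "real^'n::finite^'n"
  assumes "det A \<noteq> 0"
  shows "A ** matrix_inv A = mat 1" "matrix_inv A ** A = mat 1"
proof -
  have "\<exists>A'. A ** A' = mat 1 \<and> A' ** A = mat 1"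
    using assms invertible_det_nz unfolding invertible_def by blast
  then have "A ** matrix_inv A = mat 1 \<and> matrix_inv A ** A = mat 1"
    unfolding matrix_inv_def by (rule someI_ex)
  then show "A ** matrix_inv A = mat 1" "matrix_inv A ** A = mat 1" by auto
qed

lemma transpose_matrix_inv_sym:
  fixes A :: "real^'n::finite^'n"
  assumes "det A \<noteq> 0" "transpose A = A"
  shows "transpose (matrix_inv A) = matrix_inv A"
proof -
  have left: "transpose (matrix_inv A) ** A = mat 1"
    by (metis assms(2) det_nz_matrix_inv(1)[OF assms(1)] matrix_transpose_mul transpose_mat)
  have "transpose (matrix_inv A) = transpose (matrix_inv A) ** (A ** matrix_inv A)"
    using det_nz_matrix_inv(1)[OF assms(1)] by simp
  also have "\<dots> = matrix_inv A"
    by (simp add: matrix_mul_assoc left)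
  finally show ?thesis .
qed

lemma matrix_inv_cramer:
  fixes A :: "real^'n::finite^'n"
  assumes "det A \<noteq> 0"
  shows "matrix_inv A $ a $ b
    = det (\<chi> i j. if j = a then (if i = b then 1 else 0) else A $ i $ j) / det A"
proof -
  let ?x = "matrix_inv A *v axis b 1"
  have "A *v ?x = axis b 1"
    by (simp add: matrix_vector_mul_assoc det_nz_matrix_inv(1)[OF assms])
  then have "?x $ a = det (\<chi> i j. if j = a then axis b 1 $ i else A $ i $ j) / det A"
    using cramer[OF assms] by simp
  moreover have "(\<chi> i j. if j = a then axis b 1 $ i else A $ i $ j)
      = (\<chi> i j. if j = a then (if i = b then 1 else 0) else A $ i $ j)"
    by (simp add: vec_eq_iff axis_def)
  moreover have "?x $ a = matrix_inv A $ a $ b"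
    by (simp add: matrix_vector_mult_def axis_def if_distrib cong: if_cong)
  ultimately show ?thesis by simp
qed

lemma sum_mult_delta:
  fixes G X :: "'k::finite \<Rightarrow> real"
  assumes "\<And>n. (\<Sum>l\<in>UNIV. G l * H l n) = (if b = n then 1 else 0)"
  shows "(\<Sum>l\<in>UNIV. (\<Sum>n\<in>UNIV. H l n * X n) * G l) = X b"
proof -
  have "(\<Sum>l\<in>UNIV. (\<Sum>n\<in>UNIV. H l n * X n) * G l) = (\<Sum>l\<in>UNIV. \<Sum>n\<in>UNIV. X n * (G l * H l n))"
    by (simp add: sum_distrib_right sum_distrib_left algebra_simps)
  also have "\<dots> = (\<Sum>n\<in>UNIV. \<Sum>l\<in>UNIV. X n * (G l * H l n))" by (rule sum.swap)
  also have "\<dots> = X b"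
    by (simp add: sum_distrib_left[symmetric] assms if_distrib cong: if_cong)
  finally show ?thesis .
qed

section \<open>Symmetrised contractions\<close>

definition trilinear :: "('n::finite \<Rightarrow> 'n \<Rightarrow> 'n \<Rightarrow> real) \<Rightarrow> real^'n \<Rightarrow> real^'n \<Rightarrow> real^'n \<Rightarrow> real" where
  "trilinear N x y z = (\<Sum>a\<in>UNIV. \<Sum>b\<in>UNIV. \<Sum>c\<in>UNIV. x$a * y$b * z$c * N a b c)"

lemma trilinear_perm:
  "trilinear (\<lambda>a b c. N a c b) x y z = trilinear N x z y"
  "trilinear (\<lambda>a b c. N b a c) x y z = trilinear N y x z"
  "trilinear (\<lambda>a b c. N b c a) x y z = trilinear N y z x"
  "trilinear (\<lambda>a b c. N c a b) x y z = trilinear N z x y"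
  "trilinear (\<lambda>a b c. N c b a) x y z = trilinear N z y x"
proof -
  show swap23: "trilinear (\<lambda>a b c. N a c b) x y z = trilinear N x z y" for N x y z
    unfolding trilinear_def by (rule sum.cong[OF refl], subst sum.swap) (simp add: mult_ac)
  show swap12: "trilinear (\<lambda>a b c. N b a c) x y z = trilinear N y x z" for N x y z
    unfolding trilinear_def by (subst sum.swap) (simp add: mult_ac)
  show rotate: "trilinear (\<lambda>a b c. N b c a) x y z = trilinear N y z x" for N x y z
    using swap12[of "\<lambda>a b c. N a c b" x y z] swap23[of N y x z] by simp
  show "trilinear (\<lambda>a b c. N c a b) x y z = trilinear N z x y"
    using rotate[of "\<lambda>a b c. N c a b" z x y] by simp
  show "trilinear (\<lambda>a b c. N c b a) x y z = trilinear N z y x"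
    using rotate[of "\<lambda>a b c. N c b a" z x y] swap23[of N z x y] by simp
qed

lemma trilinear_sym3:
  "trilinear (sym3 N) x y z = (trilinear N x y z + trilinear N x z y + trilinear N y x z
     + trilinear N y z x + trilinear N z x y + trilinear N z y x) / 6"
proof -
  have "trilinear (sym3 N) x y z = (trilinear N x y z + trilinear (\<lambda>a b c. N a c b) x y z
     + trilinear (\<lambda>a b c. N b a c) x y z + trilinear (\<lambda>a b c. N b c a) x y z
     + trilinear (\<lambda>a b c. N c a b) x y z + trilinear (\<lambda>a b c. N c b a) x y z) / 6"
    unfolding trilinear_def sym3_def times_divide_eq_right sum_divide_distrib[symmetric]
    by (simp add: sum.distrib distrib_left)
  then show ?thesis by (simp only: trilinear_perm[of N])
qed

lemma trilinear_sym3_sym23: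
  assumes "\<And>a b c. N a c b = N a b c"
  shows "trilinear (sym3 N) x y z
    = (trilinear N x z y + trilinear N y z x + trilinear N z x y) / 3"
proof -
  have "(\<lambda>a b c. N a c b) = N" using assms by (intro ext) simp
  then have "trilinear N u v w = trilinear N u w v" for u v w
    using trilinear_perm(1)[of N u v w] by simp
  then show ?thesis
    unfolding trilinear_sym3 by (simp add: field_simps)
qed

lemma trilinear_tensor:
  "trilinear (\<lambda>a b c. G $ a $ b * t $ c) x y z = (x \<bullet> (G *v y)) * (t \<bullet> z)"
  by (simp add: trilinear_def inner_vec_def matrix_vector_mult_def sum_distrib_left
      sum_distrib_right mult_ac)

lemma trilinear_sym3_tensor:
  assumes "transpose G = G"
  shows "trilinear (sym3 (\<lambda>a b c. G $ a $ b * t $ c)) x y z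
    = ((x \<bullet> (G *v y)) * (t \<bullet> z) + (x \<bullet> (G *v z)) * (t \<bullet> y) + (y \<bullet> (G *v z)) * (t \<bullet> x)) / 3"
  unfolding trilinear_sym3 trilinear_tensor
  using inner_matrix_sym[OF assms, of y x] inner_matrix_sym[OF assms, of z x]
    inner_matrix_sym[OF assms, of z y]
  by (simp add: field_simps)

lemma sum_sym3:
  fixes H :: "'n::finite \<Rightarrow> 'n \<Rightarrow> real"
  shows "(\<Sum>a\<in>UNIV. \<Sum>b\<in>UNIV. H a b * sym3 N a b c)
    = ((\<Sum>a\<in>UNIV. \<Sum>b\<in>UNIV. H a b * N a b c) + (\<Sum>a\<in>UNIV. \<Sum>b\<in>UNIV. H a b * N a c b)
     + (\<Sum>a\<in>UNIV. \<Sum>b\<in>UNIV. H a b * N b a c) + (\<Sum>a\<in>UNIV. \<Sum>b\<in>UNIV. H a b * N b c a)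
     + (\<Sum>a\<in>UNIV. \<Sum>b\<in>UNIV. H a b * N c a b) + (\<Sum>a\<in>UNIV. \<Sum>b\<in>UNIV. H a b * N c b a)) / 6"
  unfolding sym3_def times_divide_eq_right sum_divide_distrib[symmetric]
  by (simp add: sum.distrib distrib_left)

lemma sum_sym3_sym23:
  fixes H :: "real^'n::finite^'n"
  assumes H: "transpose H = H" and N: "\<And>a b c. N a c b = N a b c"
  shows "(\<Sum>a\<in>UNIV. \<Sum>b\<in>UNIV. H $ a $ b * sym3 N a b c)
    = (2 * (\<Sum>a\<in>UNIV. \<Sum>b\<in>UNIV. H $ a $ b * N a b c)
       + (\<Sum>a\<in>UNIV. \<Sum>b\<in>UNIV. H $ a $ b * N c a b)) / 3"
proof -
  have "(\<Sum>a\<in>UNIV. \<Sum>b\<in>UNIV. H $ a $ b * N b a c) = (\<Sum>a\<in>UNIV. \<Sum>b\<in>UNIV. H $ a $ b * N a b c)"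
    by (subst sum.swap) (simp add: transpose_sym[OF H])
  then show ?thesis
    unfolding sum_sym3[of "\<lambda>a b. H $ a $ b"] by (simp add: N)
qed

lemma sum_sym3_tensor:
  fixes G H :: "real^'n::finite^'n"
  assumes G: "transpose G = G" and H: "transpose H = H" and HG: "H ** G = mat 1"
  shows "(\<Sum>a\<in>UNIV. \<Sum>b\<in>UNIV. H $ a $ b * sym3 (\<lambda>a b c. G $ a $ b * t $ c) a b c)
    = (real CARD('n) + 2) * t $ c / 3"
proof -
  note Gs = transpose_sym[OF G] and Hs = transpose_sym[OF H]
  have delta: "(\<Sum>a\<in>UNIV. H $ b $ a * G $ a $ c) = (if b = c then 1 else 0)" for b c
    using HG by (simp add: matrix_matrix_mult_def mat_def vec_eq_iff)
  have row: "(\<Sum>b\<in>UNIV. H $ a $ b * G $ a $ b) = 1" for a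
    using delta[of a a] Gs[of a] by simp
  have trace: "(\<Sum>a\<in>UNIV. \<Sum>b\<in>UNIV. H $ a $ b * (G $ a $ b * t $ c)) = real CARD('n) * t $ c"
    by (simp add: mult.assoc[symmetric] sum_distrib_right[symmetric] row)
  have contract: "(\<Sum>a\<in>UNIV. \<Sum>b\<in>UNIV. H $ a $ b * (G $ b $ c * t $ a)) = t $ c"
  proof -
    have "(\<Sum>a\<in>UNIV. \<Sum>b\<in>UNIV. H $ a $ b * (G $ b $ c * t $ a))
        = (\<Sum>a\<in>UNIV. t $ a * (\<Sum>b\<in>UNIV. H $ a $ b * G $ b $ c))"
      by (simp add: sum_distrib_left mult_ac)
    also have "\<dots> = t $ c" by (simp add: delta if_distrib cong: if_cong)
    finally show ?thesis .
  qed
  have swap: "(\<Sum>a\<in>UNIV. \<Sum>b\<in>UNIV. H $ a $ b * (G $ a $ c * t $ b))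
      = (\<Sum>a\<in>UNIV. \<Sum>b\<in>UNIV. H $ a $ b * (G $ b $ c * t $ a))"
    by (subst sum.swap) (simp add: Hs)
  have terms:
    "(\<Sum>a\<in>UNIV. \<Sum>b\<in>UNIV. H $ a $ b * (G $ b $ a * t $ c)) = real CARD('n) * t $ c"
    "(\<Sum>a\<in>UNIV. \<Sum>b\<in>UNIV. H $ a $ b * (G $ a $ c * t $ b)) = t $ c"
    "(\<Sum>a\<in>UNIV. \<Sum>b\<in>UNIV. H $ a $ b * (G $ c $ a * t $ b)) = t $ c"
    "(\<Sum>a\<in>UNIV. \<Sum>b\<in>UNIV. H $ a $ b * (G $ c $ b * t $ a)) = t $ c"
    subgoal using trace by (simp add: Gs)
    subgoal using swap contract by simp
    subgoal using swap contract by (simp only: Gs[of c])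
    subgoal using contract by (simp only: Gs[of c])
    done
  show ?thesis
    unfolding sum_sym3[of "\<lambda>a b. H $ a $ b"] trace contract terms by (simp add: algebra_simps)
qed

section \<open>The Levi-Civita connection\<close>

definition cov_axis :: "(real^'n::finite \<Rightarrow> real^'n^'n) \<Rightarrow> real^'n \<Rightarrow> 'n
    \<Rightarrow> (real^'n \<Rightarrow> real^'n) \<Rightarrow> real^'n" where
  "cov_axis g p a u = (\<chi> l. pd a (\<lambda>q. u q $ l) p + (\<Sum>b\<in>UNIV. chr g p l a b * u p $ b))"

lemma cov_eq_sum_cov_axis: "cov g X u p = (\<Sum>a\<in>UNIV. X p $ a *\<^sub>R cov_axis g p a u)"
  by (simp add: cov_def cov_axis_def vec_eq_iff sum_component)

lemma inner_cov: "v \<bullet> cov g X u p = (\<Sum>a\<in>UNIV. X p $ a * (v \<bullet> cov_axis g p a u))"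
  by (simp add: cov_eq_sum_cov_axis inner_sum_right)

lemma nablaT_leibniz_axis:
  fixes A :: "real^'n::finite \<Rightarrow> real^'n^'n" and u v :: "real^'n \<Rightarrow> real^'n"
  assumes dA: "\<And>b c. (\<lambda>q. A q $ b $ c) differentiable (at p)"
    and du: "\<And>b. (\<lambda>q. u q $ b) differentiable (at p)"
    and dv: "\<And>b. (\<lambda>q. v q $ b) differentiable (at p)"
  shows "(\<Sum>b\<in>UNIV. \<Sum>c\<in>UNIV. u p $ b * v p $ c * nablaT g A p a b c)
    = pd a (\<lambda>q. u q \<bullet> (A q *v v q)) p
      - (A p *v v p) \<bullet> cov_axis g p a u - (u p v* A p) \<bullet> cov_axis g p a v"
proof -
  have "(\<lambda>q. u q \<bullet> (A q *v v q)) = (\<lambda>q. \<Sum>b\<in>UNIV. u q $ b * (\<Sum>c\<in>UNIV. A q $ b $ c * v q $ c))"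
    by (simp add: inner_vec_def matrix_vector_mult_def)
  then have pd_inner: "pd a (\<lambda>q. u q \<bullet> (A q *v v q)) p = (\<Sum>b\<in>UNIV. \<Sum>c\<in>UNIV.
      u p $ b * (A p $ b $ c * pd a (\<lambda>q. v q $ c) p + pd a (\<lambda>q. A q $ b $ c) p * v p $ c)
      + pd a (\<lambda>q. u q $ b) p * (A p $ b $ c * v p $ c))"
    using dA du dv by (simp add: sum_distrib_left sum.distrib)
  have swap3: "(\<Sum>i\<in>UNIV. \<Sum>n\<in>UNIV. \<Sum>m\<in>UNIV. F i n m) = (\<Sum>m\<in>UNIV. \<Sum>n\<in>UNIV. \<Sum>i\<in>UNIV. F i n m)"
    for F :: "'n \<Rightarrow> 'n \<Rightarrow> 'n \<Rightarrow> real"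
  proof -
    have "(\<Sum>i\<in>UNIV. \<Sum>n\<in>UNIV. \<Sum>m\<in>UNIV. F i n m) = (\<Sum>i\<in>UNIV. \<Sum>m\<in>UNIV. \<Sum>n\<in>UNIV. F i n m)"
      by (rule sum.cong[OF refl], rule sum.swap)
    also have "\<dots> = (\<Sum>m\<in>UNIV. \<Sum>i\<in>UNIV. \<Sum>n\<in>UNIV. F i n m)" by (rule sum.swap)
    also have "\<dots> = (\<Sum>m\<in>UNIV. \<Sum>n\<in>UNIV. \<Sum>i\<in>UNIV. F i n m)"
      by (rule sum.cong[OF refl], rule sum.swap)
    finally show ?thesis .
  qed
  text \<open>After expansion the derivative terms agree up to exchanging the two sums, and the
    Christoffel terms up to reversing the triple sums.\<close>
  show ?thesis
    unfolding pd_inner nablaT_def cov_axis_def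
    apply (simp add: inner_vec_def matrix_vector_mult_def vector_matrix_mult_def
        sum_distrib_left sum_distrib_right sum.distrib sum_subtractf algebra_simps)
    apply (rule arg_cong2[where f="(+)"], rule sum.swap)
    apply (subst add.commute)
    apply (rule arg_cong2[where f="(+)"]; rule swap3)
    done
qed

lemma trilinear_nablaT_leibniz:
  fixes A :: "real^'n::finite \<Rightarrow> real^'n^'n" and u v :: "real^'n \<Rightarrow> real^'n"
  assumes "\<And>b c. (\<lambda>q. A q $ b $ c) differentiable (at p)"
    and "\<And>b. (\<lambda>q. u q $ b) differentiable (at p)"
    and "\<And>b. (\<lambda>q. v q $ b) differentiable (at p)"
  shows "trilinear (nablaT g A p) (X p) (u p) (v p)
    = dfun (\<lambda>q. u q \<bullet> (A q *v v q)) p \<bullet> X p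
      - (A p *v v p) \<bullet> cov g X u p - (u p v* A p) \<bullet> cov g X v p"
proof -
  have "trilinear (nablaT g A p) (X p) (u p) (v p)
      = (\<Sum>a\<in>UNIV. X p $ a * (\<Sum>b\<in>UNIV. \<Sum>c\<in>UNIV. u p $ b * v p $ c * nablaT g A p a b c))"
    by (simp add: trilinear_def sum_distrib_left mult_ac)
  also have "\<dots> = (\<Sum>a\<in>UNIV. X p $ a * (pd a (\<lambda>q. u q \<bullet> (A q *v v q)) p
      - (A p *v v p) \<bullet> cov_axis g p a u - (u p v* A p) \<bullet> cov_axis g p a v))"
    by (simp add: nablaT_leibniz_axis assms)
  also have "\<dots> = (\<Sum>a\<in>UNIV. X p $ a * pd a (\<lambda>q. u q \<bullet> (A q *v v q)) p)
      - (A p *v v p) \<bullet> cov g X u p - (u p v* A p) \<bullet> cov g X v p"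
    by (simp only: inner_cov right_diff_distrib sum_subtractf)
  also have "(\<Sum>a\<in>UNIV. X p $ a * pd a (\<lambda>q. u q \<bullet> (A q *v v q)) p)
      = dfun (\<lambda>q. u q \<bullet> (A q *v v q)) p \<bullet> X p"
    by (rule inner_dfun[symmetric])
  finally show ?thesis .
qed

definition chr_mat :: "(real^'n::finite \<Rightarrow> real^'n^'n) \<Rightarrow> real^'n \<Rightarrow> 'n \<Rightarrow> real^'n^'n" where
  "chr_mat g p c = (\<chi> l a. chr g p l c a)"

lemma nablaT_matrix:
  "(\<chi> a b. nablaT g A p c a b)
    = pd_mat c A p - transpose (chr_mat g p c) ** A p - A p ** chr_mat g p c"
  by (simp add: nablaT_def pd_mat_def chr_mat_def vec_eq_iff matrix_matrix_mult_def
      transpose_def sum.distrib mult.commute)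

locale pseudo_riemannian_at =
  fixes U :: "(real^'n::finite) set" and g :: "real^'n \<Rightarrow> real^'n^'n" and p :: "real^'n"
  assumes pseudo_riemannian: "pseudo_riemannian U g" and at_chart: "p \<in> U"
begin

lemma open_chart: "open U"
  using pseudo_riemannian unfolding pseudo_riemannian_def by auto

lemma metric_symmetric: "q \<in> U \<Longrightarrow> transpose (g q) = g q"
  using pseudo_riemannian unfolding pseudo_riemannian_def by auto

lemma metric_sym: "q \<in> U \<Longrightarrow> g q $ j $ i = g q $ i $ j"
  using metric_symmetric by (rule transpose_sym)

lemma metric_det_nz: "q \<in> U \<Longrightarrow> det (g q) \<noteq> 0"
  using pseudo_riemannian unfolding pseudo_riemannian_def by auto

lemma metric_differentiable: "(\<lambda>q. g q $ i $ j) differentiable (at p)"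
  using pseudo_riemannian at_chart unfolding pseudo_riemannian_def smooth_tf_def
  by (auto intro: smooth_fun_differentiable)

lemma metric_ginv: "q \<in> U \<Longrightarrow> g q ** ginv g q = mat 1"
  and ginv_metric: "q \<in> U \<Longrightarrow> ginv g q ** g q = mat 1"
  unfolding ginv_def using det_nz_matrix_inv metric_det_nz by blast+

lemma ginv_symmetric: "q \<in> U \<Longrightarrow> transpose (ginv g q) = ginv g q"
  unfolding ginv_def using transpose_matrix_inv_sym metric_det_nz metric_symmetric by blast

lemma ginv_sym: "q \<in> U \<Longrightarrow> ginv g q $ j $ i = ginv g q $ i $ j"
  using ginv_symmetric by (rule transpose_sym)

lemma ginv_differentiable: "(\<lambda>q. ginv g q $ a $ b) differentiable (at p)"
proof -
  have "(\<lambda>q. det (\<chi> i j. if j = a then (if i = b then 1 else 0) else g q $ i $ j))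
      differentiable (at p)"
  proof (rule det_differentiable)
    fix i j
    show "(\<lambda>q. (\<chi> i j. if j = a then (if i = b then 1 else 0) else g q $ i $ j) $ i $ j)
        differentiable (at p)"
      by (cases "j = a") (simp_all add: metric_differentiable)
  qed
  moreover have "(\<lambda>q. det (g q)) differentiable (at p)"
    by (rule det_differentiable) (rule metric_differentiable)
  ultimately have "(\<lambda>q. det (\<chi> i j. if j = a then (if i = b then 1 else 0) else g q $ i $ j)
      / det (g q)) differentiable (at p)"
    using metric_det_nz[OF at_chart] by simp
  then show ?thesis
    by (rule differentiable_transform_open[OF _ open_chart at_chart])
       (simp add: ginv_def matrix_inv_cramer metric_det_nz)
qed

lemma chr_lower: "(\<Sum>l\<in>UNIV. chr g p l m a * g p $ l $ b)
   = (1/2) * (pd m (\<lambda>q. g q $ a $ b) p + pd a (\<lambda>q. g q $ m $ b) p - pd b (\<lambda>q. g q $ m $ a) p)"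
proof -
  have delta: "(\<Sum>l\<in>UNIV. g p $ l $ b * ginv g p $ l $ n) = (if b = n then 1 else 0)" for n
    using metric_ginv[OF at_chart]
    by (simp add: metric_sym[OF at_chart, of _ b] matrix_matrix_mult_def mat_def vec_eq_iff)
  have "(\<Sum>l\<in>UNIV. chr g p l m a * g p $ l $ b) = (1/2) * (\<Sum>l\<in>UNIV. (\<Sum>n\<in>UNIV.
      ginv g p $ l $ n * (pd m (\<lambda>q. g q $ a $ n) p + pd a (\<lambda>q. g q $ m $ n) p
        - pd n (\<lambda>q. g q $ m $ a) p)) * g p $ l $ b)"
    unfolding chr_def by (simp only: mult.assoc sum_distrib_left[of "1/2", symmetric])
  then show ?thesis
    by (simp only: sum_mult_delta[where b=b, OF delta])
qed

lemma metric_compatible: "pd m (\<lambda>q. g q $ a $ b) p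
    = (\<Sum>l\<in>UNIV. chr g p l m a * g p $ l $ b + chr g p l m b * g p $ a $ l)"
proof -
  have "(\<Sum>l\<in>UNIV. chr g p l m b * g p $ a $ l) = (\<Sum>l\<in>UNIV. chr g p l m b * g p $ l $ a)"
    by (simp add: metric_sym[OF at_chart])
  moreover have "pd m (\<lambda>q. g q $ b $ a) p = pd m (\<lambda>q. g q $ a $ b) p"
    by (rule pd_cong_open[OF open_chart at_chart]) (simp add: metric_sym)
  ultimately show ?thesis
    by (simp only: sum.distrib chr_lower) (simp add: algebra_simps)
qed

lemma nablaT_metric: "nablaT g g p k i j = 0"
  unfolding nablaT_def using metric_compatible[of k i j] by (simp add: sum.distrib)

lemma pd_mat_metric: "pd_mat c g p = transpose (chr_mat g p c) ** g p + g p ** chr_mat g p c"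
proof -
  have "pd_mat c g p - transpose (chr_mat g p c) ** g p - g p ** chr_mat g p c = 0"
    unfolding nablaT_matrix[symmetric] by (simp add: nablaT_metric vec_eq_iff)
  then show ?thesis by (simp only: diff_diff_eq right_minus_eq)
qed

lemma pd_mat_ginv: "pd_mat c (ginv g) p = - (ginv g p ** pd_mat c g p ** ginv g p)"
proof -
  have "pd_mat c (\<lambda>q. g q ** ginv g q) p = 0"
    by (rule pd_mat_eq_const_open[OF open_chart at_chart]) (rule metric_ginv)
  then have "pd_mat c g p ** ginv g p + g p ** pd_mat c (ginv g) p = 0"
    using pd_mat_mult[of g p "ginv g" c] metric_differentiable ginv_differentiable by simp
  then have "g p ** pd_mat c (ginv g) p = - (pd_mat c g p ** ginv g p)"
    by (simp add: eq_neg_iff_add_eq_0 add.commute)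
  then have "ginv g p ** (g p ** pd_mat c (ginv g) p) = - (ginv g p ** pd_mat c g p ** ginv g p)"
    by (simp add: matrix_mult_neg matrix_mul_assoc)
  then show ?thesis
    by (simp add: matrix_mul_assoc ginv_metric[OF at_chart])
qed

lemma inner_metric_dfun:
  assumes "\<And>b. (\<lambda>q. u q $ b) differentiable (at p)" "\<And>b. (\<lambda>q. v q $ b) differentiable (at p)"
  shows "dfun (\<lambda>q. u q \<bullet> (g q *v v q)) p \<bullet> X p
    = (g p *v v p) \<bullet> cov g X u p + (g p *v u p) \<bullet> cov g X v p"
proof -
  have zero: "trilinear (nablaT g g p) (X p) (u p) (v p) = 0"
    by (simp add: trilinear_def nablaT_metric)
  have "0 = dfun (\<lambda>q. u q \<bullet> (g q *v v q)) p \<bullet> X p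
      - (g p *v v p) \<bullet> cov g X u p - (g p *v u p) \<bullet> cov g X v p"
    using trilinear_nablaT_leibniz[OF metric_differentiable assms, of g X]
    by (simp only: zero vector_matrix_sym[OF metric_symmetric[OF at_chart]])
  then show ?thesis by simp
qed

end

section \<open>Symmetric tensors and their eigenvectors\<close>

locale symmetric_tensor_at = pseudo_riemannian_at U g p
  for U :: "(real^'n::finite) set" and g p +
  fixes T :: "real^'n \<Rightarrow> real^'n^'n"
  assumes symmetric_tensor: "symmetric_tf U T"
begin

lemma tensor_symmetric: "q \<in> U \<Longrightarrow> transpose (T q) = T q"
  using symmetric_tensor unfolding symmetric_tf_def by auto

lemma tensor_sym: "q \<in> U \<Longrightarrow> T q $ j $ i = T q $ i $ j"
  using tensor_symmetric by (rule transpose_sym)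

lemma tensor_differentiable: "(\<lambda>q. T q $ i $ j) differentiable (at p)"
  using symmetric_tensor at_chart unfolding symmetric_tf_def smooth_tf_def
  by (auto intro: smooth_fun_differentiable)

lemma nablaT_sym: "nablaT g T p k j i = nablaT g T p k i j"
proof -
  have "pd k (\<lambda>q. T q $ j $ i) p = pd k (\<lambda>q. T q $ i $ j) p"
    by (rule pd_cong_open[OF open_chart at_chart]) (simp add: tensor_sym)
  then show ?thesis unfolding nablaT_def by (simp add: tensor_sym[OF at_chart] add.commute)
qed

text \<open>By metric compatibility, the Christoffel terms of g^ab nabla_c T_ab are exactly
  (d_c g^ab) T_ab, so the trace of nabla_c T is the derivative of the trace g^ab T_ab.\<close>

lemma nablaT_traceless:
  assumes "traceless U g T"
  shows "(\<Sum>a\<in>UNIV. \<Sum>b\<in>UNIV. ginv g p $ a $ b * nablaT g T p c a b) = 0"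
proof -
  let ?G = "g p" and ?H = "ginv g p" and ?C = "chr_mat g p c"
  have GH: "?G ** ?H = mat 1" and HG: "?H ** ?G = mat 1"
    using metric_ginv ginv_metric at_chart by blast+
  have "(\<Sum>a\<in>UNIV. \<Sum>b\<in>UNIV. ?H $ a $ b * nablaT g T p c a b)
      = (\<Sum>b\<in>UNIV. \<Sum>a\<in>UNIV. ?H $ b $ a * nablaT g T p c a b)"
    by (subst sum.swap) (simp add: ginv_sym[OF at_chart])
  also have "\<dots> = trace (?H ** (\<chi> a b. nablaT g T p c a b))"
    by (simp add: trace_def matrix_matrix_mult_def)
  also have "\<dots> = trace (?H ** pd_mat c T p) - trace (?H ** transpose ?C ** T p)
      - trace (?C ** ?H ** T p)"
    unfolding nablaT_matrix
    by (simp add: matrix_diff_ldistrib trace_sub matrix_mul_assoc trace_mul_sym[of "?H ** T p" ?C])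
  also have "\<dots> = trace (?H ** pd_mat c T p) + trace (pd_mat c (ginv g) p ** T p)"
  proof -
    have "?H ** pd_mat c g p ** ?H ** T p
        = ?H ** transpose ?C ** (?G ** ?H) ** T p + (?H ** ?G) ** ?C ** ?H ** T p"
      unfolding pd_mat_metric
      by (simp add: matrix_add_ldistrib matrix_add_rdistrib matrix_mul_assoc)
    also have "\<dots> = ?H ** transpose ?C ** T p + ?C ** ?H ** T p"
      by (simp add: GH HG matrix_mul_assoc)
    finally show ?thesis
      unfolding pd_mat_ginv by (simp add: matrix_neg_mult trace_add trace_sub trace_neg)
  qed
  also have "\<dots> = trace (pd_mat c (\<lambda>q. ginv g q ** T q) p)"
    by (simp add: pd_mat_mult ginv_differentiable tensor_differentiable trace_add add.commute)
  also have "\<dots> = pd c (\<lambda>q. trace (ginv g q ** T q)) p"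
    by (rule pd_trace[symmetric])
       (simp add: matrix_matrix_mult_def ginv_differentiable tensor_differentiable)
  also have "\<dots> = 0"
  proof (rule pd_eq_0_open[OF open_chart at_chart])
    fix q assume "q \<in> U"
    then show "trace (ginv g q ** T q) = 0"
      using assms by (simp add: traceless_def trace_def matrix_matrix_mult_def tensor_sym)
  qed
  finally show ?thesis .
qed

lemma divT_eq: "divT g T p $ c = (\<Sum>a\<in>UNIV. \<Sum>b\<in>UNIV. ginv g p $ a $ b * nablaT g T p a b c)"
  unfolding divT_def by (subst sum.swap) (simp add: ginv_sym[OF at_chart])

lemma conformal_one_form:
  assumes "traceless U g T"
    and "\<And>a b c. sym3 (nablaT g T p) a b c = sym3 (\<lambda>a b c. g p $ a $ b * t $ c) a b c"
  shows "t = (2 / (real CARD('n) + 2)) *\<^sub>R divT g T p"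
proof -
  have "(real CARD('n) + 2) * t $ c = 2 * divT g T p $ c" for c
  proof -
    have "(\<Sum>a\<in>UNIV. \<Sum>b\<in>UNIV. ginv g p $ a $ b * sym3 (nablaT g T p) a b c)
        = (\<Sum>a\<in>UNIV. \<Sum>b\<in>UNIV. ginv g p $ a $ b * sym3 (\<lambda>a b c. g p $ a $ b * t $ c) a b c)"
      by (simp add: assms(2))
    then show ?thesis
      using sum_sym3_sym23[where N = "nablaT g T p", OF ginv_symmetric[OF at_chart] nablaT_sym]
        sum_sym3_tensor[OF metric_symmetric[OF at_chart] ginv_symmetric[OF at_chart]
          ginv_metric[OF at_chart]]
      by (simp add: nablaT_traceless[OF assms(1)] divT_eq)
  qed
  then show ?thesis by (simp add: vec_eq_iff field_simps)
qed

lemma eigenvector_lower: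
  assumes "eigenvector U g T \<rho> x" "q \<in> U"
  shows "T q *v x q = \<rho> q *\<^sub>R (g q *v x q)"
proof -
  have "ginv g q *v (T q *v x q) = \<rho> q *\<^sub>R x q"
    using assms unfolding eigenvector_def endo_def by auto
  then have "g q *v (ginv g q *v (T q *v x q)) = g q *v (\<rho> q *\<^sub>R x q)" by simp
  then show ?thesis
    by (simp add: matrix_vector_mul_assoc matrix_mul_assoc metric_ginv[OF assms(2)]
        matrix_vector_mult_scaleR)
qed

lemma eigenvector_differentiable:
  assumes "eigenvector U g T \<rho> x"
  shows "(\<lambda>q. x q $ b) differentiable (at p)" "\<rho> differentiable (at p)"
  using assms at_chart unfolding eigenvector_def smooth_vf_def
  by (auto intro: smooth_fun_differentiable)

lemma eigenvectors_orthogonal: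
  assumes x: "eigenvector U g T \<rho>1 x" and y: "eigenvector U g T \<rho>2 y" and q: "q \<in> U"
    and "\<rho>1 q \<noteq> \<rho>2 q"
  shows "x q \<bullet> (g q *v y q) = 0" "x q \<bullet> (T q *v y q) = 0"
proof -
  have "\<rho>1 q * (x q \<bullet> (g q *v y q)) = x q \<bullet> (T q *v y q)"
    using inner_matrix_sym[OF tensor_symmetric[OF q], of "x q" "y q"]
      inner_matrix_sym[OF metric_symmetric[OF q], of "x q" "y q"]
    by (simp add: eigenvector_lower[OF x q])
  also have "\<dots> = \<rho>2 q * (x q \<bullet> (g q *v y q))"
    by (simp add: eigenvector_lower[OF y q])
  finally show "x q \<bullet> (g q *v y q) = 0" using assms(4) by simp
  then show "x q \<bullet> (T q *v y q) = 0"
    by (simp add: eigenvector_lower[OF y q])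
qed

lemma trilinear_nablaT_eigenvector:
  assumes y: "eigenvector U g T \<rho> y" and u: "\<And>b. (\<lambda>q. u q $ b) differentiable (at p)"
  shows "trilinear (nablaT g T p) (X p) (u p) (y p)
    = (dfun \<rho> p \<bullet> X p) * (u p \<bullet> (g p *v y p)) + \<rho> p * (u p \<bullet> (g p *v cov g X y p))
      - u p \<bullet> (T p *v cov g X y p)"
proof -
  note dy = eigenvector_differentiable[OF y]
  have "dfun (\<lambda>q. u q \<bullet> (T q *v y q)) p = dfun (\<lambda>q. \<rho> q * (u q \<bullet> (g q *v y q))) p"
    by (rule dfun_cong_open[OF open_chart at_chart]) (simp add: eigenvector_lower[OF y])
  also have "\<dots> = \<rho> p *\<^sub>R dfun (\<lambda>q. u q \<bullet> (g q *v y q)) p + (u p \<bullet> (g p *v y p)) *\<^sub>R dfun \<rho> p"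
    by (rule dfun_mult[OF dy(2) inner_matrix_differentiable])
       (simp_all add: u dy metric_differentiable)
  finally have derivative: "dfun (\<lambda>q. u q \<bullet> (T q *v y q)) p \<bullet> X p
      = \<rho> p * ((g p *v y p) \<bullet> cov g X u p + (g p *v u p) \<bullet> cov g X y p)
        + (u p \<bullet> (g p *v y p)) * (dfun \<rho> p \<bullet> X p)"
    by (simp add: inner_add_left inner_metric_dfun[OF u dy(1)])
  have "trilinear (nablaT g T p) (X p) (u p) (y p)
      = dfun (\<lambda>q. u q \<bullet> (T q *v y q)) p \<bullet> X p
        - (\<rho> p *\<^sub>R (g p *v y p)) \<bullet> cov g X u p - (T p *v u p) \<bullet> cov g X y p"
    using trilinear_nablaT_leibniz[OF tensor_differentiable u dy(1), where g = g and X = X]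
    by (simp only: eigenvector_lower[OF y at_chart]
        vector_matrix_sym[OF tensor_symmetric[OF at_chart]])
  moreover have "(g p *v u p) \<bullet> cov g X y p = u p \<bullet> (g p *v cov g X y p)"
    "(T p *v u p) \<bullet> cov g X y p = u p \<bullet> (T p *v cov g X y p)"
    using inner_matrix_sym[OF metric_symmetric[OF at_chart], of "cov g X y p" "u p"]
      inner_matrix_sym[OF tensor_symmetric[OF at_chart], of "cov g X y p" "u p"]
    by (simp_all add: inner_commute)
  ultimately show ?thesis
    unfolding derivative by (simp add: algebra_simps)
qed

lemma trilinear_nablaT_eigenvectors:
  assumes x: "eigenvector U g T \<rho> x" and y: "eigenvector U g T \<rho> y"
  shows "trilinear (nablaT g T p) (X p) (x p) (y p) = (dfun \<rho> p \<bullet> X p) * (x p \<bullet> (g p *v y p))"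
proof -
  have "x p \<bullet> (T p *v cov g X y p) = \<rho> p * (x p \<bullet> (g p *v cov g X y p))"
    using inner_matrix_sym[OF tensor_symmetric[OF at_chart], of "x p" "cov g X y p"]
      inner_matrix_sym[OF metric_symmetric[OF at_chart], of "x p" "cov g X y p"]
    by (simp add: eigenvector_lower[OF x at_chart])
  then show ?thesis
    by (simp add: trilinear_nablaT_eigenvector[OF y eigenvector_differentiable(1)[OF x]])
qed

lemma trilinear_nablaT_orthogonal_eigenvectors:
  assumes u: "eigenvector U g T \<rho>1 u" and v: "eigenvector U g T \<rho>2 v"
    and ne: "\<And>q. q \<in> U \<Longrightarrow> \<rho>1 q \<noteq> \<rho>2 q"
  shows "trilinear (nablaT g T p) (X p) (u p) (v p)
    = - ((T p *v v p) \<bullet> cov g X u p) - (T p *v u p) \<bullet> cov g X v p"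
proof -
  have "dfun (\<lambda>q. u q \<bullet> (T q *v v q)) p = 0"
    by (rule dfun_eq_0_open[OF open_chart at_chart]) (rule eigenvectors_orthogonal(2)[OF u v _ ne])
  then show ?thesis
    using trilinear_nablaT_leibniz[OF tensor_differentiable eigenvector_differentiable(1)[OF u]
        eigenvector_differentiable(1)[OF v], where g = g and X = X]
    by (simp add: vector_matrix_sym[OF tensor_symmetric[OF at_chart]])
qed

lemma eigenspace_brace:
  assumes sym: "\<And>a b c. sym3 (nablaT g T p) a b c = sym3 (\<lambda>a b c. g p $ a $ b * t $ c) a b c"
    and x: "eigenvector U g T \<rho> x" and y: "eigenvector U g T \<rho> y"
  shows "let s = ginv g p *v (dfun \<rho> p - t) in
    endo g T p (brace g x y p) - \<rho> p *\<^sub>R brace g x y p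
      = gp g p (x p) (y p) *\<^sub>R s + gp g p s (x p) *\<^sub>R y p + gp g p s (y p) *\<^sub>R x p"
proof -
  let ?G = "g p" and ?H = "ginv g p" and ?B = "brace g x y p" and ?s = "dfun \<rho> p - t"
  have HG: "?H *v (?G *v v) = v" for v
    by (simp add: matrix_vector_mul_assoc ginv_metric[OF at_chart])
  have Gsym: "u \<bullet> (?G *v v) = v \<bullet> (?G *v u)" for u v
    by (rule inner_matrix_sym[OF metric_symmetric[OF at_chart]])
  have "w \<bullet> (T p *v ?B - \<rho> p *\<^sub>R (?G *v ?B))
      = w \<bullet> ((x p \<bullet> (?G *v y p)) *\<^sub>R ?s + (?s \<bullet> x p) *\<^sub>R (?G *v y p)
          + (?s \<bullet> y p) *\<^sub>R (?G *v x p))"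
    for w
  proof -
    have "sym3 (nablaT g T p) = sym3 (\<lambda>a b c. ?G $ a $ b * t $ c)"
      using sym by (intro ext)
    then have "trilinear (nablaT g T p) (x p) w (y p) + trilinear (nablaT g T p) (y p) w (x p)
        + trilinear (nablaT g T p) w (x p) (y p)
        = (x p \<bullet> (?G *v y p)) * (t \<bullet> w) + (x p \<bullet> (?G *v w)) * (t \<bullet> y p)
          + (y p \<bullet> (?G *v w)) * (t \<bullet> x p)"
      using trilinear_sym3_sym23[where N = "nablaT g T p" and x = "x p" and y = "y p" and z = w,
          OF nablaT_sym]
        trilinear_sym3_tensor[where t = t and x = "x p" and y = "y p" and z = w,
          OF metric_symmetric[OF at_chart]]
      by simp
    moreover have "trilinear (nablaT g T p) (x p) w (y p) = (dfun \<rho> p \<bullet> x p) * (w \<bullet> (?G *v y p))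
        + \<rho> p * (w \<bullet> (?G *v cov g x y p)) - w \<bullet> (T p *v cov g x y p)"
      using trilinear_nablaT_eigenvector[OF y, where u = "\<lambda>q. w" and X = x] by simp
    moreover have "trilinear (nablaT g T p) (y p) w (x p) = (dfun \<rho> p \<bullet> y p) * (w \<bullet> (?G *v x p))
        + \<rho> p * (w \<bullet> (?G *v cov g y x p)) - w \<bullet> (T p *v cov g y x p)"
      using trilinear_nablaT_eigenvector[OF x, where u = "\<lambda>q. w" and X = y] by simp
    moreover have "trilinear (nablaT g T p) w (x p) (y p) = (dfun \<rho> p \<bullet> w) * (x p \<bullet> (?G *v y p))"
      using trilinear_nablaT_eigenvectors[OF x y, where X = "\<lambda>q. w"] by simp
    ultimately show ?thesis
      unfolding brace_def
      by (simp add: matrix_vector_right_distrib inner_add_right inner_diff_right inner_diff_left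
          inner_commute[of t] inner_commute[of "dfun \<rho> p"] Gsym[of "x p" w] Gsym[of "y p" w]
          algebra_simps)
  qed
  then have lowered: "T p *v ?B - \<rho> p *\<^sub>R (?G *v ?B)
      = (x p \<bullet> (?G *v y p)) *\<^sub>R ?s + (?s \<bullet> x p) *\<^sub>R (?G *v y p) + (?s \<bullet> y p) *\<^sub>R (?G *v x p)"
    by (subst vector_eq_ldot[symmetric]) blast
  have "endo g T p ?B - \<rho> p *\<^sub>R ?B = ?H *v (T p *v ?B - \<rho> p *\<^sub>R (?G *v ?B))"
    by (simp add: endo_def matrix_vector_mult_diff_distrib matrix_vector_mult_scaleR HG)
  also have "\<dots> = (x p \<bullet> (?G *v y p)) *\<^sub>R (?H *v ?s) + (?s \<bullet> x p) *\<^sub>R y p + (?s \<bullet> y p) *\<^sub>R x p"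
    by (simp add: lowered matrix_vector_right_distrib matrix_vector_mult_scaleR HG)
  finally have main: "endo g T p ?B - \<rho> p *\<^sub>R ?B
      = (x p \<bullet> (?G *v y p)) *\<^sub>R (?H *v ?s) + (?s \<bullet> x p) *\<^sub>R y p + (?s \<bullet> y p) *\<^sub>R x p" .
  have "(?H *v ?s) \<bullet> (?G *v v) = ?s \<bullet> v" for v
    using inner_matrix_sym[OF ginv_symmetric[OF at_chart], of "?G *v v" ?s]
    by (simp add: inner_commute HG)
  with main show ?thesis
    unfolding Let_def gp_def by simp
qed

lemma distinct_eigenvalues_brace:
  assumes sym: "\<And>a b c. sym3 (nablaT g T p) a b c = sym3 (\<lambda>a b c. g p $ a $ b * t $ c) a b c"
    and x: "eigenvector U g T \<rho>1 x" and y: "eigenvector U g T \<rho>2 y"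
    and z: "eigenvector U g T \<rho>3 z"
    and distinct: "\<forall>q\<in>U. \<rho>1 q \<noteq> \<rho>2 q \<and> \<rho>2 q \<noteq> \<rho>3 q \<and> \<rho>1 q \<noteq> \<rho>3 q"
  shows "x p \<bullet> (T p *v brace g y z p) + z p \<bullet> (T p *v brace g x y p)
    + y p \<bullet> (T p *v brace g z x p) = 0"
proof -
  have "sym3 (nablaT g T p) = sym3 (\<lambda>a b c. g p $ a $ b * t $ c)"
    using sym by (intro ext)
  then have "trilinear (nablaT g T p) (x p) (z p) (y p)
      + trilinear (nablaT g T p) (y p) (z p) (x p) + trilinear (nablaT g T p) (z p) (x p) (y p)
      = (x p \<bullet> (g p *v y p)) * (t \<bullet> z p) + (x p \<bullet> (g p *v z p)) * (t \<bullet> y p)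
        + (y p \<bullet> (g p *v z p)) * (t \<bullet> x p)"
    using trilinear_sym3_sym23[where N = "nablaT g T p" and x = "x p" and y = "y p" and z = "z p",
        OF nablaT_sym]
      trilinear_sym3_tensor[where t = t and x = "x p" and y = "y p" and z = "z p",
        OF metric_symmetric[OF at_chart]]
    by simp
  moreover have "x p \<bullet> (g p *v y p) = 0" "x p \<bullet> (g p *v z p) = 0" "y p \<bullet> (g p *v z p) = 0"
    using eigenvectors_orthogonal(1)[OF x y at_chart] eigenvectors_orthogonal(1)[OF x z at_chart]
      eigenvectors_orthogonal(1)[OF y z at_chart] distinct at_chart by auto
  moreover have "trilinear (nablaT g T p) (x p) (z p) (y p)
      = - ((T p *v y p) \<bullet> cov g x z p) - (T p *v z p) \<bullet> cov g x y p"
    by (rule trilinear_nablaT_orthogonal_eigenvectors[OF z y]) (use distinct in auto)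
  moreover have "trilinear (nablaT g T p) (y p) (z p) (x p)
      = - ((T p *v x p) \<bullet> cov g y z p) - (T p *v z p) \<bullet> cov g y x p"
    by (rule trilinear_nablaT_orthogonal_eigenvectors[OF z x]) (use distinct in auto)
  moreover have "trilinear (nablaT g T p) (z p) (x p) (y p)
      = - ((T p *v y p) \<bullet> cov g z x p) - (T p *v x p) \<bullet> cov g z y p"
    by (rule trilinear_nablaT_orthogonal_eigenvectors[OF x y]) (use distinct in auto)
  moreover have "(T p *v u) \<bullet> v = u \<bullet> (T p *v v)" for u v
    using inner_matrix_sym[OF tensor_symmetric[OF at_chart], of v u]
    by (simp only: inner_commute[of "T p *v u" v])
  ultimately show ?thesis
    unfolding brace_def by (simp add: inner_add_right algebra_simps)
qed

end

lemma killing_or_conformal_sym3: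
  fixes U :: "(real^'n::finite) set" and g T :: "real^'n \<Rightarrow> real^'n^'n"
  assumes "pseudo_riemannian U g" "p \<in> U"
    and "(killing_tensor U g T \<and> t = (\<lambda>p. 0)) \<or>
      (conformal_tensor U g T \<and> t = (\<lambda>p. (2 / (real CARD('n) + 2)) *\<^sub>R divT g T p))"
  shows "sym3 (nablaT g T p) a b c = sym3 (\<lambda>a b c. g p $ a $ b * t p $ c) a b c"
  using assms(3)
proof
  assume "killing_tensor U g T \<and> t = (\<lambda>p. 0)"
  then show ?thesis
    using assms(2) unfolding killing_tensor_def by (simp add: sym3_def)
next
  assume conformal: "conformal_tensor U g T \<and> t = (\<lambda>p. (2 / (real CARD('n) + 2)) *\<^sub>R divT g T p)"
  then obtain t' where t': "\<And>a b c. sym3 (nablaT g T p) a b c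
      = sym3 (\<lambda>a b c. g p $ a $ b * t' p $ c) a b c"
    and traceless: "traceless U g T" and symmetric: "symmetric_tf U T"
    using assms(2) unfolding conformal_tensor_def by blast
  interpret symmetric_tensor_at U g p T
    using assms(1,2) symmetric by unfold_locales
  have "t' p = t p"
    using conformal_one_form[OF traceless t'] conformal by simp
  with t' show ?thesis by simp
qed

theorem lemma3:
  fixes U :: "(real^'n::finite) set" and g T :: "real^'n \<Rightarrow> real^'n^'n"
  assumes "pseudo_riemannian U g"
  shows "\<forall>t :: real^'n \<Rightarrow> real^'n.
    ((killing_tensor U g T \<and> t = (\<lambda>p. 0)) \<or>
     (conformal_tensor U g T \<and> t = (\<lambda>p. (2 / (real CARD('n) + 2)) *\<^sub>R divT g T p))) \<longrightarrow>
    (\<forall>\<rho> x y. eigenvector U g T \<rho> x \<and> eigenvector U g T \<rho> y \<longrightarrow>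
       (\<forall>p\<in>U. let s = ginv g p *v (dfun \<rho> p - t p) in
          endo g T p (brace g x y p) - \<rho> p *\<^sub>R brace g x y p
            = gp g p (x p) (y p) *\<^sub>R s + gp g p s (x p) *\<^sub>R y p + gp g p s (y p) *\<^sub>R x p)) \<and>
    (\<forall>\<rho>1 \<rho>2 \<rho>3 x y z. eigenvector U g T \<rho>1 x \<and> eigenvector U g T \<rho>2 y \<and> eigenvector U g T \<rho>3 z \<and>
       (\<forall>p\<in>U. \<rho>1 p \<noteq> \<rho>2 p \<and> \<rho>2 p \<noteq> \<rho>3 p \<and> \<rho>1 p \<noteq> \<rho>3 p) \<longrightarrow>
       (\<forall>p\<in>U. x p \<bullet> (T p *v brace g y z p) + z p \<bullet> (T p *v brace g x y p)
               + y p \<bullet> (T p *v brace g z x p) = 0))"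
proof (intro allI impI conjI ballI, goal_cases)
  case (1 t \<rho> x y p)
  then interpret symmetric_tensor_at U g p T
    using assms by unfold_locales (auto simp: killing_tensor_def conformal_tensor_def)
  from 1 have x: "eigenvector U g T \<rho> x" and y: "eigenvector U g T \<rho> y" by auto
  show ?case
    by (rule eigenspace_brace[OF killing_or_conformal_sym3[OF assms \<open>p \<in> U\<close> 1(1)] x y])
next
  case (2 t \<rho>1 \<rho>2 \<rho>3 x y z p)
  then interpret symmetric_tensor_at U g p T
    using assms by unfold_locales (auto simp: killing_tensor_def conformal_tensor_def)
  from 2 have x: "eigenvector U g T \<rho>1 x" and y: "eigenvector U g T \<rho>2 y"
    and z: "eigenvector U g T \<rho>3 z"
    and distinct: "\<forall>q\<in>U. \<rho>1 q \<noteq> \<rho>2 q \<and> \<rho>2 q \<noteq> \<rho>3 q \<and> \<rho>1 q \<noteq> \<rho>3 q"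
    by auto
  show ?case
    by (rule distinct_eigenvalues_brace[OF killing_or_conformal_sym3[OF assms \<open>p \<in> U\<close> 2(1)]
          x y z distinct])
qed

end
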